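(* Let $\alpha_a$ be a labeled dGL hybrid game, $S$ an inductive Angelic subvalue map for $\alpha_a$, and $\varphi$ a formula compatible with $S$ (i.e. $\models S(\mathsf{end})\rightarrow\varphi$). Then every state satisfying $S(a)$ satisfies $\langle\mathcal{U}(\alpha_a,S)\rangle\varphi$.
   Context: Differential game logic (dGL). Hybrid games are generated by $\alpha,\beta ::= x:=e \mid \alpha;\beta \mid ?Q \mid \{x'=f(x)\,\&\,Q\} \mid \alpha^{*} \mid \alpha\cup\beta \mid x:=* \mid\ !Q \mid \{x'=f(x)\,\&\,Q\}^{d} \mid \alpha^{\times} \mid \alpha\cap\beta \mid x:=\otimes$, with $x$ a real variable (vector for ODEs), $e,f(x)$ polynomial terms, $Q$ a formula. Players Angel and Demon: $x:=e$ deterministic assignment; in $x:=*$ Angel (in $x:=\otimes$ Demon) assigns any real; in $\{x'=f(x)\&Q\}$ Angel (in $\{\cdot\}^d$ Demon) chooses a duration $r\ge 0$ of following the ODE with $Q$ true throughout; $?Q$ makes Angel lose and $!Q$ makes Demon lose if $Q$ is false; in $\alpha\cup\beta$ Angel (in $\alpha\cap\beta$ Demon) chooses the branch; in $\alpha^*$ Angel (in $\alpha^\times$ Demon) decides before each iteration whether to repeat or stop; $\alpha;\beta$ sequential. Formulas: polynomial (in)equalities closed under connectives, real quantifiers, and modalities $\langle\alpha\rangle\varphi$ (Angel can win $\alpha$ reaching $\varphi$) and $[\alpha]\varphi\equiv\neg\langle\alpha\rangle\neg\varphi$, with the standard dGL winning-region semantics ($\langle x:=*\rangle\varphi\leftrightarrow\exists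 x\varphi$, $\langle x:=\otimes\rangle\varphi\leftrightarrow\forall x\varphi$, $\langle ?Q\rangle\varphi\leftrightarrow Q\wedge\varphi$, $\langle !Q\rangle\varphi\leftrightarrow(Q\rightarrow\varphi)$, $\cup$ as disjunction, $\cap$ as conjunction, $\langle\alpha;\beta\rangle\varphi\leftrightarrow\langle\alpha\rangle\langle\beta\rangle\varphi$, Angel ODE existential, Demon ODE universal, $\langle\alpha^*\rangle$ least and $\langle\alpha^\times\rangle$ greatest fixed point). $\models$ denotes validity. Labels: every node of the syntax tree carries a unique label; $\alpha_a$ has root label $a$; $\mathrm{nodes}(\alpha_a)$ is its set of subgame labels; $\mathsf{end}$ is a special extra label. A map $S$ assigns formulas to a label set containing $\mathrm{nodes}(\alpha_a)\cup\{\mathsf{end}\}$; $S\{\mathsf{end}\mapsto Q\}$ replaces the value at $\mathsf{end}$. $\gamma_g,\delta_d$ denote immediate subgames with root labels $g,d$. Existential projection $\mathcal{P}(\alpha_a,S)$: $(x:=* )_a\mapsto(x:=* )_a;?S(\mathsf{end})$; $\{x'=f(x)\&Q\}_a\mapsto\{x'=f(x)\&Q\}_a;?S(\mathsf{end})$; $(\gamma_g\cup\delta_d)_a\mapsto(?S(g);\mathcal{P}(\gamma_g,S))\cup(?S(d);\mathcal{P}(\delta_d,S))$; $((\gamma_g)^* )_a\mapsto(?S(g);\mathcal{P}(\gamma_g,S\{\mathsf{end}\mapsto S(a)\}))^*;?S(\mathsf{end})$; $(\gamma_g;\delta_d)_a\mapsto\mathcal{P}(\gamma_g,S\{\mathsf{end}\mapsto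 S(d)\});\mathcal{P}(\delta_d,S)$; $(\gamma_g\cap\delta_d)_a\mapsto\mathcal{P}(\gamma_g,S)\cap\mathcal{P}(\delta_d,S)$; $((\gamma_g)^\times)_a\mapsto\mathcal{P}(\gamma_g,S\{\mathsf{end}\mapsto S(a)\})^\times$; $x:=e,x:=\otimes,?Q,!Q,\{x'=f(x)\&Q\}^d$ unchanged (labels preserved, new nodes fresh labels). Universal projection $\mathcal{U}(\alpha_a,S)$: $(x:=* )_a\mapsto (x:=\otimes)_a;\,!S(\mathsf{end})$; $\{x'=f(x)\&Q\}_a\mapsto(\{x'=f(x)\&Q\}^d)_a;\,!S(\mathsf{end})$; $(\gamma_g\cup\delta_d)_a\mapsto(!S(g);\mathcal{U}(\gamma_g,S))\cap(!S(d);\mathcal{U}(\delta_d,S))$; $((\gamma_g)^* )_a\mapsto(!S(g);\mathcal{U}(\gamma_g,S\{\mathsf{end}\mapsto S(a)\}))^{\times};\,!S(\mathsf{end})$; $(\gamma_g;\delta_d)_a\mapsto\mathcal{U}(\gamma_g,S\{\mathsf{end}\mapsto S(d)\});\mathcal{U}(\delta_d,S)$; $(\gamma_g\cap\delta_d)_a\mapsto\mathcal{U}(\gamma_g,S)\cap\mathcal{U}(\delta_d,S)$; $((\gamma_g)^\times)_a\mapsto\mathcal{U}(\gamma_g,S\{\mathsf{end}\mapsto S(a)\})^\times$; $x:=e,x:=\otimes,?Q,!Q,\{x'=f(x)\&Q\}^d$ unchanged (labels preserved, new nodes fresh labels). Inductive Angelic subvalue map ($S\Vdash\alpha_a$), recursively: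 atomic $\alpha$ ($x:=e,x:=*,x:=\otimes,?Q,!Q$, Angel or Demon ODE): $\models S(a)\rightarrow\langle\alpha\rangle S(\mathsf{end})$; $(\gamma_g\cup\delta_d)_a$: $\models S(a)\rightarrow S(g)\vee S(d)$, $S\Vdash\gamma_g$, $S\Vdash\delta_d$; $(\gamma_g\cap\delta_d)_a$: $\models S(a)\rightarrow S(g)\wedge S(d)$ and both; $(\gamma_g;\delta_d)_a$: $\models S(a)\rightarrow S(g)$, $S\{\mathsf{end}\mapsto S(d)\}\Vdash\gamma_g$, $S\Vdash\delta_d$; $((\gamma_g)^* )_a$: $\models S(a)\rightarrow\langle\mathcal{P}(\alpha_a,S)\rangle S(\mathsf{end})$ and $S\{\mathsf{end}\mapsto S(a)\}\Vdash\gamma_g$; $((\gamma_g)^\times)_a$: $\models S(a)\rightarrow S(g)\wedge S(\mathsf{end})$ and $S\{\mathsf{end}\mapsto S(a)\}\Vdash\gamma_g$. *)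

theory Defs
  imports Complex_Main
begin

type_synonym var = nat
type_synonym state = "var \<Rightarrow> real"

datatype trm =
    Var var
  | Const real
  | Neg trm
  | Plus trm trm
  | Times trm trm

datatype fml =
    FTrue
  | FFalse
  | Eq trm trm
  | Leq trm trm
  | Less trm trm
  | FNot fml
  | FAnd fml fml
  | FOr fml fml
  | FImp fml fml
  | FEx var fml
  | FAll var fml
  | Dia game fml
and game =
    Assign var trm
  | AssignAny var
  | AssignDemon var
  | Test fml
  | Assert fml
  | ODE "(var \<times> trm) list" fml
  | ODED "(var \<times> trm) list" fml
  | Seq game game
  | Choice game game
  | DChoice game game
  | Star game
  | Cross game

definition Box :: "game \<Rightarrow> fml \<Rightarrow> fml" where
  "Box a p = FNot (Dia a (FNot p))"

fun tsem :: "trm \<Rightarrow> state \<Rightarrow> real" where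
  "tsem (Var x) w = w x"
| "tsem (Const c) w = c"
| "tsem (Neg e) w = - tsem e w"
| "tsem (Plus e1 e2) w = tsem e1 w + tsem e2 w"
| "tsem (Times e1 e2) w = tsem e1 w * tsem e2 w"

definition ode_sol ::
  "(var \<times> trm) list \<Rightarrow> state set \<Rightarrow> state \<Rightarrow> real \<Rightarrow> (real \<Rightarrow> state) \<Rightarrow> bool" where
  "ode_sol xs P w r F \<longleftrightarrow>
     0 \<le> r \<and> F 0 = w \<and>
     (\<forall>t\<in>{0..r}. \<forall>y. y \<notin> fst ` set xs \<longrightarrow> F t y = w y) \<and>
     (\<forall>(x, e)\<in>set xs. \<forall>t\<in>{0..r}.
        ((\<lambda>s. F s x) has_real_derivative tsem e (F t)) (at t within {0..r})) \<and>
     (\<forall>t\<in>{0..r}. F t \<in> P)"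

fun fsem :: "fml \<Rightarrow> state set"
and gsem :: "game \<Rightarrow> state set \<Rightarrow> state set" where
  "fsem FTrue = UNIV"
| "fsem FFalse = {}"
| "fsem (Eq e1 e2) = {w. tsem e1 w = tsem e2 w}"
| "fsem (Leq e1 e2) = {w. tsem e1 w \<le> tsem e2 w}"
| "fsem (Less e1 e2) = {w. tsem e1 w < tsem e2 w}"
| "fsem (FNot p) = - fsem p"
| "fsem (FAnd p q) = fsem p \<inter> fsem q"
| "fsem (FOr p q) = fsem p \<union> fsem q"
| "fsem (FImp p q) = - fsem p \<union> fsem q"
| "fsem (FEx x p) = {w. \<exists>v. w(x := v) \<in> fsem p}"
| "fsem (FAll x p) = {w. \<forall>v. w(x := v) \<in> fsem p}"
| "fsem (Dia a p) = gsem a (fsem p)"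
| "gsem (Assign x e) X = {w. w(x := tsem e w) \<in> X}"
| "gsem (AssignAny x) X = {w. \<exists>v. w(x := v) \<in> X}"
| "gsem (AssignDemon x) X = {w. \<forall>v. w(x := v) \<in> X}"
| "gsem (Test q) X = fsem q \<inter> X"
| "gsem (Assert q) X = - fsem q \<union> X"
| "gsem (ODE xs q) X = {w. \<exists>r F. ode_sol xs (fsem q) w r F \<and> F r \<in> X}"
| "gsem (ODED xs q) X = {w. \<forall>r F. ode_sol xs (fsem q) w r F \<longrightarrow> F r \<in> X}"
| "gsem (Seq a b) X = gsem a (gsem b X)"
| "gsem (Choice a b) X = gsem a X \<union> gsem b X"
| "gsem (DChoice a b) X = gsem a X \<inter> gsem b X"
| "gsem (Star a) X = lfp (\<lambda>Z. X \<union> gsem a Z)"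
| "gsem (Cross a) X = gfp (\<lambda>Z. X \<inter> gsem a Z)"

definition valid :: "fml \<Rightarrow> bool" where
  "valid p \<longleftrightarrow> (\<forall>w. w \<in> fsem p)"

datatype lgame =
    LAssign nat var trm
  | LAssignAny nat var
  | LAssignDemon nat var
  | LTest nat fml
  | LAssert nat fml
  | LODE nat "(var \<times> trm) list" fml
  | LODED nat "(var \<times> trm) list" fml
  | LSeq nat lgame lgame
  | LChoice nat lgame lgame
  | LDChoice nat lgame lgame
  | LStar nat lgame
  | LCross nat lgame

datatype lbl = L nat | End

fun root :: "lgame \<Rightarrow> nat" where
  "root (LAssign a _ _) = a"
| "root (LAssignAny a _) = a"
| "root (LAssignDemon a _) = a"
| "root (LTest a _) = a"
| "root (LAssert a _) = a"
| "root (LODE a _ _) = a"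
| "root (LODED a _ _) = a"
| "root (LSeq a _ _) = a"
| "root (LChoice a _ _) = a"
| "root (LDChoice a _ _) = a"
| "root (LStar a _) = a"
| "root (LCross a _) = a"

fun nodes :: "lgame \<Rightarrow> nat list" where
  "nodes (LSeq a g d) = a # nodes g @ nodes d"
| "nodes (LChoice a g d) = a # nodes g @ nodes d"
| "nodes (LDChoice a g d) = a # nodes g @ nodes d"
| "nodes (LStar a g) = a # nodes g"
| "nodes (LCross a g) = a # nodes g"
| "nodes g = [root g]"

fun erase :: "lgame \<Rightarrow> game" where
  "erase (LAssign _ x e) = Assign x e"
| "erase (LAssignAny _ x) = AssignAny x"
| "erase (LAssignDemon _ x) = AssignDemon x"
| "erase (LTest _ q) = Test q"
| "erase (LAssert _ q) = Assert q"
| "erase (LODE _ xs q) = ODE xs q"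
| "erase (LODED _ xs q) = ODED xs q"
| "erase (LSeq _ g d) = Seq (erase g) (erase d)"
| "erase (LChoice _ g d) = Choice (erase g) (erase d)"
| "erase (LDChoice _ g d) = DChoice (erase g) (erase d)"
| "erase (LStar _ g) = Star (erase g)"
| "erase (LCross _ g) = Cross (erase g)"

type_synonym smap = "lbl \<Rightarrow> fml"

text \<open>Existential projection \<open>\<P>(\<alpha>_a, S)\<close> (labels of the result are irrelevant to
  its semantics and are therefore erased).\<close>
fun eproj :: "lgame \<Rightarrow> smap \<Rightarrow> game" where
  "eproj (LAssignAny a x) S = Seq (AssignAny x) (Test (S End))"
| "eproj (LODE a xs q) S = Seq (ODE xs q) (Test (S End))"
| "eproj (LChoice a g d) S =
     Choice (Seq (Test (S (L (root g)))) (eproj g S))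
            (Seq (Test (S (L (root d)))) (eproj d S))"
| "eproj (LStar a g) S =
     Seq (Star (Seq (Test (S (L (root g)))) (eproj g (S(End := S (L a)))))) (Test (S End))"
| "eproj (LSeq a g d) S = Seq (eproj g (S(End := S (L (root d))))) (eproj d S)"
| "eproj (LDChoice a g d) S = DChoice (eproj g S) (eproj d S)"
| "eproj (LCross a g) S = Cross (eproj g (S(End := S (L a))))"
| "eproj (LAssign a x e) S = Assign x e"
| "eproj (LAssignDemon a x) S = AssignDemon x"
| "eproj (LTest a q) S = Test q"
| "eproj (LAssert a q) S = Assert q"
| "eproj (LODED a xs q) S = ODED xs q"

fun uproj :: "lgame \<Rightarrow> smap \<Rightarrow> game" where
  "uproj (LAssignAny a x) S = Seq (AssignDemon x) (Assert (S End))"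
| "uproj (LODE a xs q) S = Seq (ODED xs q) (Assert (S End))"
| "uproj (LChoice a g d) S =
     DChoice (Seq (Assert (S (L (root g)))) (uproj g S))
             (Seq (Assert (S (L (root d)))) (uproj d S))"
| "uproj (LStar a g) S =
     Seq (Cross (Seq (Assert (S (L (root g)))) (uproj g (S(End := S (L a)))))) (Assert (S End))"
| "uproj (LSeq a g d) S = Seq (uproj g (S(End := S (L (root d))))) (uproj d S)"
| "uproj (LDChoice a g d) S = DChoice (uproj g S) (uproj d S)"
| "uproj (LCross a g) S = Cross (uproj g (S(End := S (L a))))"
| "uproj (LAssign a x e) S = Assign x e"
| "uproj (LAssignDemon a x) S = AssignDemon x"
| "uproj (LTest a q) S = Test q"
| "uproj (LAssert a q) S = Assert q"
| "uproj (LODED a xs q) S = ODED xs q"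

fun subval :: "smap \<Rightarrow> lgame \<Rightarrow> bool" where
  "subval S (LChoice a g d) \<longleftrightarrow>
     valid (FImp (S (L a)) (FOr (S (L (root g))) (S (L (root d))))) \<and> subval S g \<and> subval S d"
| "subval S (LDChoice a g d) \<longleftrightarrow>
     valid (FImp (S (L a)) (FAnd (S (L (root g))) (S (L (root d))))) \<and> subval S g \<and> subval S d"
| "subval S (LSeq a g d) \<longleftrightarrow>
     valid (FImp (S (L a)) (S (L (root g)))) \<and>
     subval (S(End := S (L (root d)))) g \<and> subval S d"
| "subval S (LStar a g) \<longleftrightarrow>
     valid (FImp (S (L a)) (Dia (eproj (LStar a g) S) (S End))) \<and>
     subval (S(End := S (L a))) g"
| "subval S (LCross a g) \<longleftrightarrow>
     valid (FImp (S (L a)) (FAnd (S (L (root g))) (S End))) \<and>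
     subval (S(End := S (L a))) g"
| "subval S g \<longleftrightarrow> valid (FImp (S (L (root g))) (Dia (erase g) (S End)))"

end

theory Submission
  imports Defs
begin

text \<open>Induct on the game, generalising the postcondition \<open>\<phi>\<close> to an arbitrary
  set of states containing \<open>S(end)\<close>.  Wherever Angel chose, the universal projection hands
  the choice to Demon but guards it by an assertion of the subvalue Angel would have
  guaranteed, so Demon either preserves the subvalues or loses.  For both kinds of
  repetition \<open>S(a)\<close> is a greatest-fixed-point invariant, by the induction hypothesis for
  the loop body with \<open>end \<mapsto> S(a)\<close>.\<close>

lemma valid_FImp_iff: "valid (FImp p q) \<longleftrightarrow> fsem p \<subseteq> fsem q"
  by (auto simp: valid_def)

lemma gsem_mono: "X \<subseteq> Y \<Longrightarrow> gsem a X \<subseteq> gsem a Y"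
proof (induction a arbitrary: X Y)
  case (Star a)
  from Star.prems have "\<And>Z. X \<union> gsem a Z \<subseteq> Y \<union> gsem a Z" by blast
  then show ?case by (simp add: lfp_mono)
next
  case (Cross a)
  from Cross.prems have "\<And>Z. X \<inter> gsem a Z \<subseteq> Y \<inter> gsem a Z" by blast
  then show ?case by (simp add: gfp_mono)
next
  case (Seq a b)
  then show ?case by simp
next
  case (Choice a b)
  then show ?case by (simp only: gsem.simps) (intro Un_mono; blast)
next
  case (DChoice a b)
  then show ?case by (simp only: gsem.simps) (intro Int_mono; blast)
qed (force simp: subset_iff)+

lemma subval_uproj_sound:
  assumes "subval S \<alpha>" and "fsem (S End) \<subseteq> X"
  shows "fsem (S (L (root \<alpha>))) \<subseteq> gsem (uproj \<alpha> S) X"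
  using assms
proof (induction \<alpha> arbitrary: S X)
  case (LODED a xs q)
  then show ?case
    using gsem_mono[of "fsem (S End)" X "ODED xs q"] by (auto simp: valid_FImp_iff)
next
  case (LSeq a g d)
  let ?S' = "S(End := S (L (root d)))"
  have "subval ?S' g"
    using LSeq.prems by simp
  moreover have "fsem (?S' End) \<subseteq> gsem (uproj d S) X"
    using LSeq by simp
  ultimately have "fsem (?S' (L (root g))) \<subseteq> gsem (uproj g ?S') (gsem (uproj d S) X)"
    by (rule LSeq.IH(1))
  then show ?case
    using LSeq.prems by (auto simp: valid_FImp_iff)
next
  case (LChoice a g d)
  then have "fsem (S (L (root g))) \<subseteq> gsem (uproj g S) X"
    and "fsem (S (L (root d))) \<subseteq> gsem (uproj d S) X"
    by simp_all
  then show ?case by auto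
next
  case (LDChoice a g d)
  then have "fsem (S (L (root g))) \<subseteq> gsem (uproj g S) X"
    and "fsem (S (L (root d))) \<subseteq> gsem (uproj d S) X"
    by simp_all
  then show ?case
    using LDChoice.prems by (auto simp: valid_FImp_iff)
next
  case (LStar a g)
  let ?S' = "S(End := S (L a))"
  let ?body = "Seq (Assert (S (L (root g)))) (uproj g ?S')"
  have "subval ?S' g"
    using LStar.prems by simp
  then have "fsem (?S' (L (root g))) \<subseteq> gsem (uproj g ?S') (fsem (S (L a)))"
    by (rule LStar.IH) simp
  then have "fsem (S (L a)) \<subseteq> gsem ?body (fsem (S (L a)))"
    by auto
  then have "fsem (S (L a)) \<subseteq> gfp (\<lambda>Z. UNIV \<inter> gsem ?body Z)"
    by (simp add: gfp_upperbound)
  txt \<open>The exit assertion \<open>!S(end)\<close> never fails Demon since \<open>S(end) \<subseteq> X\<close>.\<close>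
  moreover have "- fsem (S End) \<union> X = UNIV"
    using LStar.prems(2) by blast
  ultimately show ?case by simp
next
  case (LCross a g)
  let ?S' = "S(End := S (L a))"
  have "subval ?S' g"
    using LCross.prems by simp
  then have "fsem (?S' (L (root g))) \<subseteq> gsem (uproj g ?S') (fsem (S (L a)))"
    by (rule LCross.IH) simp
  then have "fsem (S (L a)) \<subseteq> X \<inter> gsem (uproj g ?S') (fsem (S (L a)))"
    using LCross.prems by (auto simp: valid_FImp_iff)
  then show ?case by (simp add: gfp_upperbound)
qed (auto simp: valid_FImp_iff)

theorem mainTheorem10:
  fixes \<alpha> :: lgame and S :: smap and \<phi> :: fml
  assumes "distinct (nodes \<alpha>)"
    and "subval S \<alpha>"
    and "valid (FImp (S End) \<phi>)"
  shows "\<forall>w. w \<in> fsem (S (L (root \<alpha>))) \<longrightarrow> w \<in> fsem (Dia (uproj \<alpha> S) \<phi>)"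
  using subval_uproj_sound[OF assms(2)] assms(3) by (auto simp: valid_FImp_iff)

end
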